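(* Let $f:\mathcal{X}\times\mathcal{U}\to\mathcal{X}$ be Lipschitz with constant $L_f$ (i.e. $\|f(x,u)-f(x',u')\|_\infty\le L_f\|(x-x',u-u')\|_\infty$) with $f(0,u_0)=0$, and let $V:\mathcal{X}\to\mathbb{R}$ and $\pi:\mathcal{X}\to\mathcal{U}$, with $\pi$ Lipschitz with constant $L_\pi$. Let $\gamma>0$, $\epsilon>0$, and suppose $(V,\pi)$ is $\epsilon$-stable within $\mathcal{R}(\gamma)$, $\|\pi(0)-u_0\|_\infty\le\epsilon$, and $\gamma\ge L_f\max\{1,L_\pi+1\}\epsilon$. Let $B(\gamma)$ be any number with $B(\gamma)\ge\max\big(\sup_{x\in\mathcal{R}(\gamma)}\|f(x,\pi(x))\|_\infty,\ \gamma\big)$, let $V^*=\min\{V(x): x\in\mathcal{X},\ \gamma\le\|x\|_\infty\le B(\gamma)\}$ (assumed to be attained), and let $\rho=V^*-\mu$ for some $\mu>0$. Then $\mathcal{D}(\gamma,\rho)=\{x\in\mathcal{R}(\gamma): V(x)\le\rho\}$ is an $\mathcal{R}(\gamma)$-invariant sublevel set, i.e. $x\in\mathcal{D}(\gamma,\rho)$ implies $f(x,\pi(x))\in\mathcal{R}(\gamma)$.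
   Context: All norms are $\|\cdot\|_\infty$. $\mathcal{R}(\gamma)=\{x\in\mathcal{X}:\|x\|_\infty\le\gamma\}$. $\mathcal{B}(0,\epsilon)=\{x:\|x\|_\infty<\epsilon\}$. The pair $(V,\pi)$ is called $\epsilon$-stable within a region $\mathcal{R}$ if: (a) $V(0)=0$; (b) there exists $\zeta>0$ such that $V(f(x,\pi(x)))-V(x)<-\zeta$ for all $x\in\mathcal{R}\setminus\mathcal{B}(0,\epsilon)$; (c) $V(x)>0$ for all $x\in\mathcal{R}\setminus\mathcal{B}(0,\epsilon)$. *)

theory Defs
  imports "HOL-Analysis.Analysis"
begin

definition Rset :: "real \<Rightarrow> ('a::euclidean_space) set" where
  "Rset \<gamma> = {x. infnorm x \<le> \<gamma>}"

definition Bset0 :: "real \<Rightarrow> ('a::euclidean_space) set" where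
  "Bset0 \<epsilon> = {x. infnorm x < \<epsilon>}"

definition eps_stable ::
  "('x::euclidean_space \<Rightarrow> 'u \<Rightarrow> 'x) \<Rightarrow> ('x \<Rightarrow> real) \<Rightarrow> ('x \<Rightarrow> 'u) \<Rightarrow> real \<Rightarrow> 'x set \<Rightarrow> bool" where
  "eps_stable f V \<pi> \<epsilon> R \<longleftrightarrow>
     V 0 = 0 \<and>
     (\<exists>\<zeta>>0. \<forall>x \<in> R - Bset0 \<epsilon>. V (f x (\<pi> x)) - V x < - \<zeta>) \<and>
     (\<forall>x \<in> R - Bset0 \<epsilon>. V x > 0)"

definition Dset :: "('x::euclidean_space \<Rightarrow> real) \<Rightarrow> real \<Rightarrow> real \<Rightarrow> 'x set" where
  "Dset V \<gamma> \<rho> = {x \<in> Rset \<gamma>. V x \<le> \<rho>}"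

end

theory Submission
  imports Defs
begin

text \<open>Let \<open>x \<in> \<D>(\<gamma>,\<rho>)\<close> and \<open>y = f(x,\<pi>(x))\<close>, so \<open>\<parallel>y\<parallel> \<le> B(\<gamma>)\<close>.
If \<open>\<parallel>x\<parallel> \<ge> \<epsilon>\<close>, the decrease condition gives \<open>V(y) < V(x) \<le> \<rho> < V\<^sup>*\<close>, so \<open>y\<close> cannot lie
in the shell \<open>\<gamma> \<le> \<parallel>y\<parallel> \<le> B(\<gamma>)\<close> on which \<open>V \<ge> V\<^sup>*\<close>; hence \<open>\<parallel>y\<parallel> < \<gamma>\<close>.
If \<open>\<parallel>x\<parallel> < \<epsilon>\<close>, comparing with the equilibrium \<open>f(0,u\<^sub>0) = 0\<close> via the Lipschitz bounds
gives \<open>\<parallel>y\<parallel> \<le> L\<^sub>f (L\<^sub>\<pi> + 1) \<epsilon> \<le> \<gamma>\<close>.\<close>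

lemma infnorm_lipschitz_const_nonneg:
  fixes g :: "'a::euclidean_space \<Rightarrow> 'b::euclidean_space"
  assumes lip: "\<And>x x'. infnorm (g x - g x') \<le> L * infnorm (x - x')"
  shows "0 \<le> L"
proof -
  obtain e :: 'a where "e \<in> Basis" using nonempty_Basis by blast
  then have e_pos: "0 < infnorm e" using nonzero_Basis infnorm_pos_lt by blast
  have "0 \<le> infnorm (g e - g 0)" by (rule infnorm_pos_le)
  also have "\<dots> \<le> L * infnorm e" using lip[of e 0] by simp
  finally show ?thesis using e_pos by (simp add: zero_le_mult_iff)
qed

lemma eps_stable_decrease:
  assumes "eps_stable f V \<pi> \<epsilon> R" and "x \<in> R - Bset0 \<epsilon>"
  shows "V (f x (\<pi> x)) < V x"
proof -
  obtain \<zeta> where "\<zeta> > 0" "V (f x (\<pi> x)) - V x < - \<zeta>"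
    using assms unfolding eps_stable_def by blast
  then show ?thesis by linarith
qed

lemma closed_loop_step_near_equilibrium:
  fixes f :: "'x::euclidean_space \<Rightarrow> 'u::euclidean_space \<Rightarrow> 'x"
  assumes f_lip: "\<And>x x' u u'. infnorm (f x u - f x' u') \<le> Lf * max (infnorm (x - x')) (infnorm (u - u'))"
    and f_eq: "f 0 u0 = 0"
    and pi_lip: "\<And>x x'. infnorm (\<pi> x - \<pi> x') \<le> L\<pi> * infnorm (x - x')"
    and pi0: "infnorm (\<pi> 0 - u0) \<le> \<epsilon>"
    and x_small: "infnorm x \<le> \<epsilon>"
  shows "infnorm (f x (\<pi> x)) \<le> Lf * (L\<pi> + 1) * \<epsilon>"
proof -
  have Lf_nonneg: "0 \<le> Lf"
    using f_lip[of _ u0 _ u0]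
    by (intro infnorm_lipschitz_const_nonneg[of "\<lambda>x. f x u0"]) (simp add: infnorm_0 max_absorb1 infnorm_pos_le)
  have L\<pi>_nonneg: "0 \<le> L\<pi>" by (rule infnorm_lipschitz_const_nonneg[OF pi_lip])
  have "\<epsilon> \<ge> 0" using x_small infnorm_pos_le order_trans by blast
  have "infnorm (\<pi> x - u0) \<le> infnorm (\<pi> x - \<pi> 0) + infnorm (\<pi> 0 - u0)"
    using infnorm_triangle[of "\<pi> x - \<pi> 0" "\<pi> 0 - u0"] by simp
  also have "\<dots> \<le> L\<pi> * \<epsilon> + \<epsilon>"
    using pi_lip[of x 0] pi0 mult_left_mono[OF x_small L\<pi>_nonneg] by simp
  finally have "max (infnorm (x - 0)) (infnorm (\<pi> x - u0)) \<le> (L\<pi> + 1) * \<epsilon>"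
    using x_small mult_nonneg_nonneg[OF L\<pi>_nonneg \<open>\<epsilon> \<ge> 0\<close>] by (simp add: algebra_simps)
  then have "Lf * max (infnorm (x - 0)) (infnorm (\<pi> x - u0)) \<le> Lf * ((L\<pi> + 1) * \<epsilon>)"
    using Lf_nonneg by (rule mult_left_mono)
  moreover have "infnorm (f x (\<pi> x)) \<le> Lf * max (infnorm (x - 0)) (infnorm (\<pi> x - u0))"
    using f_lip[of x "\<pi> x" 0 u0] by (simp add: f_eq)
  ultimately show ?thesis by (simp add: mult.assoc)
qed

theorem theorem2:
  fixes f :: "real^'n \<Rightarrow> real^'m \<Rightarrow> real^'n"
    and V :: "real^'n \<Rightarrow> real"
    and \<pi> :: "real^'n \<Rightarrow> real^'m"
    and u0 :: "real^'m"
    and Lf L\<pi> \<gamma> \<epsilon> B Vstar \<mu> \<rho> :: real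
  assumes f_lip: "\<And>x x' u u'. infnorm (f x u - f x' u') \<le> Lf * max (infnorm (x - x')) (infnorm (u - u'))"
    and f_eq: "f 0 u0 = 0"
    and pi_lip: "\<And>x x'. infnorm (\<pi> x - \<pi> x') \<le> L\<pi> * infnorm (x - x')"
    and gamma_pos: "\<gamma> > 0"
    and eps_pos: "\<epsilon> > 0"
    and stable: "eps_stable f V \<pi> \<epsilon> (Rset \<gamma>)"
    and pi0: "infnorm (\<pi> 0 - u0) \<le> \<epsilon>"
    and gamma_ge: "\<gamma> \<ge> Lf * max 1 (L\<pi> + 1) * \<epsilon>"
    and B_ge_sup: "\<And>x. x \<in> Rset \<gamma> \<Longrightarrow> infnorm (f x (\<pi> x)) \<le> B"
    and B_ge_gamma: "\<gamma> \<le> B"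
    and Vstar_attained: "\<exists>x. \<gamma> \<le> infnorm x \<and> infnorm x \<le> B \<and> V x = Vstar"
    and Vstar_min: "\<And>x. \<gamma> \<le> infnorm x \<Longrightarrow> infnorm x \<le> B \<Longrightarrow> Vstar \<le> V x"
    and mu_pos: "\<mu> > 0"
    and rho_def: "\<rho> = Vstar - \<mu>"
  shows "\<forall>x \<in> Dset V \<gamma> \<rho>. f x (\<pi> x) \<in> Rset \<gamma>"
proof
  fix x assume "x \<in> Dset V \<gamma> \<rho>"
  then have x_R: "x \<in> Rset \<gamma>" and Vx: "V x \<le> \<rho>" by (auto simp: Dset_def)
  show "f x (\<pi> x) \<in> Rset \<gamma>"
  proof (cases "x \<in> Bset0 \<epsilon>")
    case True
    have "infnorm (f x (\<pi> x)) \<le> Lf * (L\<pi> + 1) * \<epsilon>"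
      using True by (intro closed_loop_step_near_equilibrium[OF f_lip f_eq pi_lip pi0])
        (simp add: Bset0_def)
    also have "\<dots> \<le> \<gamma>"
      using gamma_ge infnorm_lipschitz_const_nonneg[OF pi_lip] by simp
    finally show ?thesis by (simp add: Rset_def)
  next
    case False
    have "V (f x (\<pi> x)) < Vstar"
      using eps_stable_decrease[OF stable] x_R False Vx rho_def mu_pos by fastforce
    then have "\<not> \<gamma> \<le> infnorm (f x (\<pi> x))"
      using Vstar_min B_ge_sup[OF x_R] by force
    then show ?thesis by (simp add: Rset_def)
  qed
qed

end
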